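(* Let $A$ and $B$ be independent and identically distributed real random variables with $\mathbb{E}[A]=0$ and $\operatorname{Var}(A)=1$. Then \[ \mathbb{E}\big[|A^2-B^2|\big]+4\,\big(\mathbb{E}\big[|A-B|\big]\big)^2\;\ge\;2 . \] *)

theory Defs
  imports "HOL-Probability.Probability"
begin

end

theory Submission
  imports Defs
begin

text \<open>
  Put \<open>a = E|A| = E|B|\<close>. Pointwise, \<open>|A\<^sup>2 - B\<^sup>2| \<ge> A\<^sup>2 + B\<^sup>2 - 2|A||B|\<close>, so by independence
  \<open>E|A\<^sup>2 - B\<^sup>2| \<ge> 2 - 2a\<^sup>2\<close>. Pointwise also \<open>|A - B| \<ge> |A| - sgn A \<cdot> B\<close>, and
  \<open>E[sgn A \<cdot> B] = E[sgn A] E[B] = 0\<close>, so \<open>E|A - B| \<ge> a\<close>. Hence the left-hand side is at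
  least \<open>2 - 2a\<^sup>2 + 4a\<^sup>2 \<ge> 2\<close>.
\<close>

lemma abs_square_diff_ge:
  fixes a b :: real
  shows "a\<^sup>2 + b\<^sup>2 - 2 * (\<bar>a\<bar> * \<bar>b\<bar>) \<le> \<bar>a\<^sup>2 - b\<^sup>2\<bar>"
proof -
  have "a\<^sup>2 + b\<^sup>2 - 2 * (\<bar>a\<bar> * \<bar>b\<bar>) = \<bar>\<bar>a\<bar> - \<bar>b\<bar>\<bar> * \<bar>\<bar>a\<bar> - \<bar>b\<bar>\<bar>"
    by (simp add: power2_eq_square algebra_simps)
  also have "\<dots> \<le> \<bar>\<bar>a\<bar> - \<bar>b\<bar>\<bar> * (\<bar>a\<bar> + \<bar>b\<bar>)"
    by (intro mult_left_mono) auto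
  also have "\<dots> = \<bar>(\<bar>a\<bar> - \<bar>b\<bar>) * (\<bar>a\<bar> + \<bar>b\<bar>)\<bar>"
    by (simp add: abs_mult)
  also have "\<dots> = \<bar>a\<^sup>2 - b\<^sup>2\<bar>"
    by (simp add: power2_eq_square algebra_simps)
  finally show ?thesis .
qed

lemma abs_minus_sgn_mult_le_abs_diff:
  fixes a b :: real
  shows "\<bar>a\<bar> - sgn a * b \<le> \<bar>a - b\<bar>"
proof -
  have "\<bar>a\<bar> - sgn a * b = sgn a * (a - b)"
    by (simp add: abs_sgn algebra_simps)
  also have "\<dots> \<le> \<bar>a - b\<bar>"
    by (cases a rule: linorder_cases[of _ 0]) auto
  finally show ?thesis .
qed

lemma
  fixes f :: "real \<Rightarrow> real"
  assumes [measurable]: "X \<in> borel_measurable M" "Y \<in> borel_measurable M" "f \<in> borel_measurable borel"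
    and distr_eq: "distr M borel X = distr M borel Y"
  shows integrable_comp_iff_of_distr_eq: "integrable M (\<lambda>x. f (X x)) \<longleftrightarrow> integrable M (\<lambda>x. f (Y x))"
    and integral_comp_eq_of_distr_eq: "(\<integral>x. f (X x) \<partial>M) = (\<integral>x. f (Y x) \<partial>M)"
  using integrable_distr_eq[of X M borel f] integrable_distr_eq[of Y M borel f]
    integral_distr[of X M borel f] integral_distr[of Y M borel f]
  by (simp_all add: distr_eq)

context prob_space
begin

lemma expectation_abs_le_expectation_abs_diff:
  fixes X Y :: "'a \<Rightarrow> real"
  assumes indep: "indep_var borel X borel Y"
    and X: "integrable M X" and Y: "integrable M Y" and mean_zero: "expectation Y = 0"
  shows "expectation (\<lambda>x. \<bar>X x\<bar>) \<le> expectation (\<lambda>x. \<bar>X x - Y x\<bar>)"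
proof -
  have "indep_var borel (sgn \<circ> X) borel (id \<circ> Y)"
    by (rule indep_var_compose[OF indep]) auto
  then have indep_sgn: "indep_var borel (\<lambda>x. sgn (X x)) borel Y"
    by (simp add: comp_def)
  have sgn_X: "integrable M (\<lambda>x. sgn (X x))"
    using X by (intro integrable_const_bound[where B=1]) (auto simp: abs_sgn_eq)
  have "expectation (\<lambda>x. sgn (X x) * Y x) = 0"
    using indep_var_lebesgue_integral[OF indep_sgn sgn_X Y] mean_zero by simp
  then have "expectation (\<lambda>x. \<bar>X x\<bar>) = expectation (\<lambda>x. \<bar>X x\<bar> - sgn (X x) * Y x)"
    using X indep_var_integrable[OF indep_sgn sgn_X Y] by simp
  also have "\<dots> \<le> expectation (\<lambda>x. \<bar>X x - Y x\<bar>)"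
    using X Y indep_var_integrable[OF indep_sgn sgn_X Y]
    by (intro integral_mono) (auto intro: abs_minus_sgn_mult_le_abs_diff)
  finally show ?thesis .
qed

lemma expectation_abs_square_diff_ge:
  fixes X Y :: "'a \<Rightarrow> real"
  assumes indep: "indep_var borel X borel Y"
    and [measurable]: "X \<in> borel_measurable M" "Y \<in> borel_measurable M"
    and X2: "integrable M (\<lambda>x. (X x)\<^sup>2)" and Y2: "integrable M (\<lambda>x. (Y x)\<^sup>2)"
  shows "expectation (\<lambda>x. (X x)\<^sup>2) + expectation (\<lambda>x. (Y x)\<^sup>2)
           - 2 * (expectation (\<lambda>x. \<bar>X x\<bar>) * expectation (\<lambda>x. \<bar>Y x\<bar>))
         \<le> expectation (\<lambda>x. \<bar>(X x)\<^sup>2 - (Y x)\<^sup>2\<bar>)"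
proof -
  have "indep_var borel (abs \<circ> X) borel (abs \<circ> Y)"
    by (rule indep_var_compose[OF indep]) auto
  then have indep_abs: "indep_var borel (\<lambda>x. \<bar>X x\<bar>) borel (\<lambda>x. \<bar>Y x\<bar>)"
    by (simp add: comp_def)
  have X_abs: "integrable M (\<lambda>x. \<bar>X x\<bar>)" and Y_abs: "integrable M (\<lambda>x. \<bar>Y x\<bar>)"
    using square_integrable_imp_integrable[of X] square_integrable_imp_integrable[of Y] X2 Y2
    by auto
  note prod_integrable = indep_var_integrable[OF indep_abs X_abs Y_abs]
  have "expectation (\<lambda>x. (X x)\<^sup>2) + expectation (\<lambda>x. (Y x)\<^sup>2)
          - 2 * (expectation (\<lambda>x. \<bar>X x\<bar>) * expectation (\<lambda>x. \<bar>Y x\<bar>))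
        = expectation (\<lambda>x. (X x)\<^sup>2 + (Y x)\<^sup>2 - 2 * (\<bar>X x\<bar> * \<bar>Y x\<bar>))"
    using indep_var_lebesgue_integral[OF indep_abs X_abs Y_abs] X2 Y2 prod_integrable by simp
  also have "\<dots> \<le> expectation (\<lambda>x. \<bar>(X x)\<^sup>2 - (Y x)\<^sup>2\<bar>)"
    using X2 Y2 prod_integrable by (intro integral_mono) (auto intro: abs_square_diff_ge)
  finally show ?thesis .
qed

end

theorem mainTheorem1:
  fixes M :: "'a measure" and A B :: "'a \<Rightarrow> real"
  assumes "prob_space M"
    and "A \<in> borel_measurable M" and "B \<in> borel_measurable M"
    and "prob_space.indep_var M borel A borel B"
    and "distr M borel A = distr M borel B"
    and "integrable M (\<lambda>x. (A x)^2)"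
    and "prob_space.expectation M A = 0"
    and "prob_space.variance M A = 1"
  shows "prob_space.expectation M (\<lambda>x. \<bar>(A x)^2 - (B x)^2\<bar>)
           + 4 * (prob_space.expectation M (\<lambda>x. \<bar>A x - B x\<bar>))^2 \<ge> 2"
proof -
  interpret prob_space M by fact
  note same_distr = integrable_comp_iff_of_distr_eq[OF assms(2,3) _ assms(5)]
    integral_comp_eq_of_distr_eq[OF assms(2,3) _ assms(5)]
  have A2: "integrable M (\<lambda>x. (A x)\<^sup>2)" and B2: "integrable M (\<lambda>x. (B x)\<^sup>2)"
    using assms(6) same_distr(1)[of "\<lambda>t. t\<^sup>2"] by auto
  define a where "a = expectation (\<lambda>x. \<bar>A x\<bar>)"
  have EA2: "expectation (\<lambda>x. (A x)\<^sup>2) = 1" and EB2: "expectation (\<lambda>x. (B x)\<^sup>2) = 1"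
    and EB: "expectation B = 0" and EabsB: "expectation (\<lambda>x. \<bar>B x\<bar>) = a"
    using assms(7,8) same_distr(2)[of "\<lambda>t. t\<^sup>2"] same_distr(2)[of "\<lambda>t. t"]
      same_distr(2)[of abs] by (simp_all add: a_def)
  have "a \<le> expectation (\<lambda>x. \<bar>A x - B x\<bar>)"
    using assms(2,3) A2 B2 EB square_integrable_imp_integrable unfolding a_def
    by (intro expectation_abs_le_expectation_abs_diff[OF assms(4)])
  then have "a\<^sup>2 \<le> (expectation (\<lambda>x. \<bar>A x - B x\<bar>))\<^sup>2"
    by (rule power_mono) (simp add: a_def)
  moreover have "2 - 2 * a\<^sup>2 \<le> expectation (\<lambda>x. \<bar>(A x)\<^sup>2 - (B x)\<^sup>2\<bar>)"
    using expectation_abs_square_diff_ge[OF assms(4,2,3) A2 B2]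
    unfolding EA2 EB2 EabsB a_def[symmetric] by (simp add: power2_eq_square)
  ultimately show ?thesis
    using zero_le_power2[of a] by linarith
qed

end
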